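(* Consider a trained binary-classifier neural network with $N$ hidden neurons, a validation dataset of size $S$ with a binary sensitive attribute, integers $0 \le n_l < n_u \le N$, the search space $\mathcal{S} = \{ s \in \{0,1\}^N : n_l \le HW(s) \le n_u\}$, a threshold multiplier $t \in (0,1)$ and a penalty multiplier $p > 1$, and the cost function $$\mathrm{cost}(s) = EOD_s + p \cdot EOD_{s_0} \cdot \mathbf{1}(F1_s < t \cdot F1_{s_0}).$$ Run simulated annealing on $\mathcal{S}$ with this cost, neighborhood $\Gamma(s) = \{s' \in \mathcal{S} : HD(s,s')=1\}$, and logarithmic cooling schedule $T_m = T_0/\log(2+m)$, where $T_0 \ge (1 + p \cdot EOD_{s_0})(n_u - n_l)$. Then there is a constant $A > 0$ such that for every $k > \lceil \frac{n_u - n_l}{2} \rceil$, the probability that simulated annealing finds a global minimum of $\mathrm{cost}$ over $\mathcal{S}$ within $k$ iterations is greater than $$1 - \frac{A}{\left(\frac{k}{n_u - n_l}\right)^{c}}, \qquad \text{where } c := \min\left( \frac{1}{(n_u - n_l) N^{\lceil \frac{n_u - n_l}{2} \rceil}}, \frac{4}{T_0 S^2} \right).$$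
   Context: A state $s \in \{0,1\}^N$ specifies which hidden neurons are dropped ($s_i = 1$ iff neuron $i$ is dropped, i.e. its output is set to $0$); $s_0$ denotes the all-zero state (the original network without dropout). $HW$ is Hamming weight and $HD$ Hamming distance. For a state $s$, $EOD_s$ and $F1_s$ are the Equalized Odds Difference and F1 score of the network with the neurons of $s$ dropped, evaluated on the validation dataset: with sensitive attribute $A \in \{0,1\}$, label $Y$ and prediction $h(X)$, $EOD = \max\big(|P[h(X)=1 \mid A=0,Y=1] - P[h(X)=1 \mid A=1,Y=1]|,\ |P[h(X)=1 \mid A=0,Y=0] - P[h(X)=1 \mid A=1,Y=0]|\big)$ (empirical probabilities), and $F1 = \frac{2TP}{2TP+FP+FN}$. $\mathbf{1}(\cdot)$ is the indicator function. Simulated annealing: start from some state in $\mathcal{S}$; at iteration $m = 0,1,2,\dots$, from current state $s$ sample $s'$ uniformly from $\Gamma(s)$, compute $\Delta E = \mathrm{cost}(s') - \mathrm{cost}(s)$, move to $s'$ if $\Delta E \le 0$, and otherwise move to $s'$ with probability $e^{-\Delta E/T_m}$ (else stay at $s$). "Finds a global minimum within $k$ iterations" means that some state visited in the first $k$ iterations minimizes $\mathrm{cost}$ over $\mathcal{S}$. *)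

theory Defs
  imports "HOL-Probability.Probability"
begin

text \<open>Dropout states: boolean lists of length N; entry i is True iff hidden neuron i is dropped.
  The trained network is abstracted as a function
  h :: bool list => 'x => bool giving the predicted label of input x when the neurons
  marked in the state are dropped.  The validation dataset is a list of triples
  (features, sensitive attribute A, label Y); its size S is its length.\<close>

definition HW :: "bool list \<Rightarrow> nat" where
  "HW s = length (filter id s)"

definition HD :: "bool list \<Rightarrow> bool list \<Rightarrow> nat" where
  "HD s s' = card {i. i < length s \<and> s ! i \<noteq> s' ! i}"

definition s0 :: "nat \<Rightarrow> bool list" where
  "s0 N = replicate N False"

text \<open>Empirical P[h(X)=1 | A=a, Y=y] (convention: 0 if the conditioning group is empty).\<close>
definition cond_rate ::
  "(bool list \<Rightarrow> 'x \<Rightarrow> bool) \<Rightarrow> ('x \<times> bool \<times> bool) list \<Rightarrow> bool list \<Rightarrow> bool \<Rightarrow> bool \<Rightarrow> real" where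
  "cond_rate h D s a y =
     real (length (filter (\<lambda>(x, a', y'). a' = a \<and> y' = y \<and> h s x) D)) /
     real (length (filter (\<lambda>(x, a', y'). a' = a \<and> y' = y) D))"

definition EOD ::
  "(bool list \<Rightarrow> 'x \<Rightarrow> bool) \<Rightarrow> ('x \<times> bool \<times> bool) list \<Rightarrow> bool list \<Rightarrow> real" where
  "EOD h D s = max \<bar>cond_rate h D s False True - cond_rate h D s True True\<bar>
                   \<bar>cond_rate h D s False False - cond_rate h D s True False\<bar>"

definition TP :: "(bool list \<Rightarrow> 'x \<Rightarrow> bool) \<Rightarrow> ('x \<times> bool \<times> bool) list \<Rightarrow> bool list \<Rightarrow> nat" where
  "TP h D s = length (filter (\<lambda>(x, a, y). y \<and> h s x) D)"
definition FP :: "(bool list \<Rightarrow> 'x \<Rightarrow> bool) \<Rightarrow> ('x \<times> bool \<times> bool) list \<Rightarrow> bool list \<Rightarrow> nat" where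
  "FP h D s = length (filter (\<lambda>(x, a, y). \<not> y \<and> h s x) D)"
definition FN :: "(bool list \<Rightarrow> 'x \<Rightarrow> bool) \<Rightarrow> ('x \<times> bool \<times> bool) list \<Rightarrow> bool list \<Rightarrow> nat" where
  "FN h D s = length (filter (\<lambda>(x, a, y). y \<and> \<not> h s x) D)"

text \<open>F1 score (convention: 0 if the denominator is 0).\<close>
definition F1 :: "(bool list \<Rightarrow> 'x \<Rightarrow> bool) \<Rightarrow> ('x \<times> bool \<times> bool) list \<Rightarrow> bool list \<Rightarrow> real" where
  "F1 h D s = 2 * real (TP h D s) / (2 * real (TP h D s) + real (FP h D s) + real (FN h D s))"

definition indicator_bool :: "bool \<Rightarrow> real" where
  "indicator_bool b = (if b then 1 else 0)"

definition cost ::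
  "nat \<Rightarrow> real \<Rightarrow> real \<Rightarrow> (bool list \<Rightarrow> 'x \<Rightarrow> bool) \<Rightarrow> ('x \<times> bool \<times> bool) list \<Rightarrow> bool list \<Rightarrow> real" where
  "cost N p t h D s = EOD h D s + p * EOD h D (s0 N) * indicator_bool (F1 h D s < t * F1 h D (s0 N))"

definition search_space :: "nat \<Rightarrow> nat \<Rightarrow> nat \<Rightarrow> bool list set" where
  "search_space N nl nu = {s. length s = N \<and> nl \<le> HW s \<and> HW s \<le> nu}"

definition nbhd :: "nat \<Rightarrow> nat \<Rightarrow> nat \<Rightarrow> bool list \<Rightarrow> bool list set" where
  "nbhd N nl nu s = {s' \<in> search_space N nl nu. HD s s' = 1}"

definition sa_step ::
  "('s \<Rightarrow> real) \<Rightarrow> ('s \<Rightarrow> 's set) \<Rightarrow> (nat \<Rightarrow> real) \<Rightarrow> nat \<Rightarrow> 's \<Rightarrow> 's pmf" where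
  "sa_step E G T m s =
     bind_pmf (pmf_of_set (G s)) (\<lambda>s'.
       let dE = E s' - E s in
       if dE \<le> 0 then return_pmf s'
       else map_pmf (\<lambda>b. if b then s' else s) (bernoulli_pmf (exp (- dE / T m))))"

fun sa_run ::
  "('s \<Rightarrow> real) \<Rightarrow> ('s \<Rightarrow> 's set) \<Rightarrow> (nat \<Rightarrow> real) \<Rightarrow> 's \<Rightarrow> nat \<Rightarrow> 's list pmf" where
  "sa_run E G T init 0 = return_pmf [init]"
| "sa_run E G T init (Suc m) =
     bind_pmf (sa_run E G T init m) (\<lambda>xs. map_pmf (\<lambda>s'. xs @ [s']) (sa_step E G T m (last xs)))"

definition is_global_min :: "('s \<Rightarrow> real) \<Rightarrow> 's set \<Rightarrow> 's \<Rightarrow> bool" where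
  "is_global_min E SS s \<longleftrightarrow> s \<in> SS \<and> (\<forall>s'\<in>SS. E s \<le> E s')"

end

theory Submission
  imports Defs
begin

text \<open>Follow the annealing chain killed on first visiting a global minimiser and measure its
  sub-probability mass \<open>v\<^sub>k\<close> by the energy \<open>\<Sum>x. v\<^sub>k(x)\<^sup>2 / w\<^sub>k(x)\<close>, where
  \<open>w\<^sub>k(x) = |\<Gamma>(x)| exp(-cost x / T\<^sub>k)\<close> is the reversing measure of step \<open>k\<close>.
  A canonical-path Poincare inequality (every state is at most \<open>N\<close> flips from a
  minimiser) gives step \<open>k\<close> a spectral gap of order \<open>k\<^sup>-\<^sup>\<alpha>\<close> with
  \<open>\<alpha> = (H - \<kappa>)/T0 < 1\<close>, where \<open>H = 1 + p EOD\<^sub>s\<^sub>0\<close> bounds the cost and \<open>\<kappa> > 0\<close>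
  is the least non-minimal cost; lowering the temperature costs only a factor
  \<open>(k + 3)/(k + 2)\<close>. So the energy is \<open>O(k exp(-c k\<^sup>1\<^sup>-\<^sup>\<alpha>))\<close> and, by Cauchy--Schwarz,
  so is the square of the probability of never having met a minimiser: it decays
  faster than any power of \<open>k\<close>, whatever the exponent in the claimed bound.\<close>

definition weighted_sqnorm :: "'s set \<Rightarrow> ('s \<Rightarrow> real) \<Rightarrow> ('s \<Rightarrow> real) \<Rightarrow> real" where
  "weighted_sqnorm X w f = (\<Sum>x\<in>X. w x * (f x)\<^sup>2)"

definition dirichlet_form :: "'s set \<Rightarrow> ('s \<Rightarrow> real) \<Rightarrow> ('s \<Rightarrow> 's \<Rightarrow> real) \<Rightarrow> ('s \<Rightarrow> real) \<Rightarrow> real" where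
  "dirichlet_form X w K f = (\<Sum>y\<in>X. \<Sum>x\<in>X. w y * K y x * (f y - f x)\<^sup>2) / 2"

definition poincare_ineq :: "'s set \<Rightarrow> 's set \<Rightarrow> ('s \<Rightarrow> real) \<Rightarrow> ('s \<Rightarrow> 's \<Rightarrow> real) \<Rightarrow> real \<Rightarrow> bool" where
  "poincare_ineq X A w K \<delta> \<longleftrightarrow>
     (\<forall>f. (\<forall>x\<in>X. x \<in> A \<longrightarrow> f x = 0) \<longrightarrow> \<delta> * weighted_sqnorm X w f \<le> dirichlet_form X w K f)"

definition killed_op :: "'s set \<Rightarrow> 's set \<Rightarrow> ('s \<Rightarrow> 's \<Rightarrow> real) \<Rightarrow> ('s \<Rightarrow> real) \<Rightarrow> 's \<Rightarrow> real" where
  "killed_op X A K h y = (if y \<in> A then 0 else (\<Sum>x\<in>X. K y x * (if x \<in> A then 0 else h x)))"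

definition killed_form ::
  "'s set \<Rightarrow> 's set \<Rightarrow> ('s \<Rightarrow> real) \<Rightarrow> ('s \<Rightarrow> 's \<Rightarrow> real) \<Rightarrow> ('s \<Rightarrow> real) \<Rightarrow> ('s \<Rightarrow> real) \<Rightarrow> real" where
  "killed_form X A w K g h = (\<Sum>y\<in>X. \<Sum>x\<in>X. (if y \<in> A \<or> x \<in> A then 0 else w y * K y x) * g y * h x)"

lemma weighted_sqnorm_parallelogram:
  "weighted_sqnorm X w (\<lambda>x. g x + h x) + weighted_sqnorm X w (\<lambda>x. g x - h x)
     = 2 * weighted_sqnorm X w g + 2 * weighted_sqnorm X w h"
  unfolding weighted_sqnorm_def
  by (simp add: sum.distrib[symmetric] sum_distrib_left power2_eq_square algebra_simps)

lemma killed_form_eq_sum_killed_op: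
  "killed_form X A w K g h = (\<Sum>y\<in>X. w y * g y * killed_op X A K h y)"
  unfolding killed_form_def killed_op_def
  by (auto simp: sum_distrib_left algebra_simps intro!: sum.cong)

lemma killed_form_scale_left:
  "killed_form X A w K (\<lambda>y. r * g y) h = r * killed_form X A w K g h"
  unfolding killed_form_def by (simp add: sum_distrib_left algebra_simps)

lemma killed_form_polarization:
  "killed_form X A w K (\<lambda>x. g x + h x) (\<lambda>x. g x + h x)
     - killed_form X A w K (\<lambda>x. g x - h x) (\<lambda>x. g x - h x)
   = 2 * killed_form X A w K g h + 2 * killed_form X A w K h g"
  unfolding killed_form_def
  by (simp add: sum_subtractf[symmetric] sum.distrib[symmetric] sum_distrib_left algebra_simps)

lemma abs_diff_le_relpowp:
  assumes "(R ^^ n) x y" and "\<And>u v. R u v \<Longrightarrow> \<bar>f u - f v\<bar> \<le> s"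
  shows "\<bar>f x - f y\<bar> \<le> real n * s"
  using assms(1)
proof (induction n arbitrary: y)
  case 0
  then show ?case by simp
next
  case (Suc n)
  then obtain z where "(R ^^ n) x z" and "R z y" by (auto elim: relpowp_Suc_E)
  then have "\<bar>f x - f z\<bar> \<le> real n * s" and "\<bar>f z - f y\<bar> \<le> s"
    using Suc.IH assms(2) by auto
  then show ?case by (simp add: algebra_simps)
qed

locale reversible_kernel =
  fixes X :: "'s set" and w :: "'s \<Rightarrow> real" and K :: "'s \<Rightarrow> 's \<Rightarrow> real"
  assumes weight_pos: "x \<in> X \<Longrightarrow> 0 < w x"
    and kernel_nonneg: "x \<in> X \<Longrightarrow> y \<in> X \<Longrightarrow> 0 \<le> K x y"
    and kernel_stochastic: "x \<in> X \<Longrightarrow> (\<Sum>y\<in>X. K x y) = 1"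
    and reversible: "x \<in> X \<Longrightarrow> y \<in> X \<Longrightarrow> w x * K x y = w y * K y x"
begin

lemma weight_nonneg: "x \<in> X \<Longrightarrow> 0 \<le> w x"
  using weight_pos less_imp_le by blast

lemma killed_form_commute: "killed_form X A w K g h = killed_form X A w K h g"
proof -
  have "killed_form X A w K g h
      = (\<Sum>x\<in>X. \<Sum>y\<in>X. (if y \<in> A \<or> x \<in> A then 0 else w y * K y x) * g y * h x)"
    unfolding killed_form_def by (rule sum.swap)
  also have "\<dots> = killed_form X A w K h g"
    unfolding killed_form_def by (intro sum.cong refl) (auto simp: reversible)
  finally show ?thesis .
qed

lemma killed_form_abs_le:
  "\<bar>killed_form X A w K h h\<bar> \<le> killed_form X A w K (\<lambda>x. \<bar>h x\<bar>) (\<lambda>x. \<bar>h x\<bar>)"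
proof -
  have "\<bar>killed_form X A w K h h\<bar>
      \<le> (\<Sum>y\<in>X. \<Sum>x\<in>X. \<bar>(if y \<in> A \<or> x \<in> A then 0 else w y * K y x) * h y * h x\<bar>)"
    unfolding killed_form_def by (rule order_trans[OF sum_abs sum_mono[OF sum_abs]])
  also have "\<dots> = killed_form X A w K (\<lambda>x. \<bar>h x\<bar>) (\<lambda>x. \<bar>h x\<bar>)"
    unfolding killed_form_def
    by (intro sum.cong refl) (auto simp: abs_mult weight_nonneg kernel_nonneg)
  finally show ?thesis .
qed

lemma sum_kernel_product_eq_sqnorm_minus_dirichlet:
  "(\<Sum>y\<in>X. \<Sum>x\<in>X. w y * K y x * f y * f x) = weighted_sqnorm X w f - dirichlet_form X w K f"
proof -
  have left: "(\<Sum>y\<in>X. \<Sum>x\<in>X. w y * K y x * (f y)\<^sup>2) = weighted_sqnorm X w f"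
    unfolding weighted_sqnorm_def
  proof (intro sum.cong refl)
    fix y assume "y \<in> X"
    have "(\<Sum>x\<in>X. w y * K y x * (f y)\<^sup>2) = (\<Sum>x\<in>X. K y x) * (w y * (f y)\<^sup>2)"
      by (simp add: sum_distrib_right sum_distrib_left mult.commute mult.left_commute mult.assoc)
    then show "(\<Sum>x\<in>X. w y * K y x * (f y)\<^sup>2) = w y * (f y)\<^sup>2"
      using kernel_stochastic[OF \<open>y \<in> X\<close>] by simp
  qed
  have "(\<Sum>y\<in>X. \<Sum>x\<in>X. w y * K y x * (f x)\<^sup>2) = (\<Sum>x\<in>X. \<Sum>y\<in>X. w x * K x y * (f x)\<^sup>2)"
    by (subst sum.swap) (intro sum.cong refl, simp add: reversible)
  with left have right: "(\<Sum>y\<in>X. \<Sum>x\<in>X. w y * K y x * (f x)\<^sup>2) = weighted_sqnorm X w f"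
    by simp
  have "\<And>y x. w y * K y x * (f y - f x)\<^sup>2
      = w y * K y x * (f y)\<^sup>2 + w y * K y x * (f x)\<^sup>2 - 2 * (w y * K y x * f y * f x)"
    by (simp add: power2_eq_square algebra_simps)
  then have "dirichlet_form X w K f = weighted_sqnorm X w f - (\<Sum>y\<in>X. \<Sum>x\<in>X. w y * K y x * f y * f x)"
    unfolding dirichlet_form_def
    by (simp add: sum_subtractf sum.distrib sum_distrib_left[symmetric] left right)
  then show ?thesis by simp
qed

lemma killed_form_le:
  assumes "poincare_ineq X A w K \<delta>" "\<delta> \<le> 1"
  shows "killed_form X A w K f f \<le> (1 - \<delta>) * weighted_sqnorm X w f"
proof -
  define f0 where "f0 = (\<lambda>x. if x \<in> A then 0 else f x)"
  have "killed_form X A w K f f = (\<Sum>y\<in>X. \<Sum>x\<in>X. w y * K y x * f0 y * f0 x)"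
    unfolding killed_form_def f0_def by (intro sum.cong refl) auto
  also have "\<dots> = weighted_sqnorm X w f0 - dirichlet_form X w K f0"
    by (rule sum_kernel_product_eq_sqnorm_minus_dirichlet)
  also have "\<dots> \<le> (1 - \<delta>) * weighted_sqnorm X w f0"
    using assms(1) by (simp add: poincare_ineq_def f0_def algebra_simps)
  also have "\<dots> \<le> (1 - \<delta>) * weighted_sqnorm X w f"
    using \<open>\<delta> \<le> 1\<close> unfolding weighted_sqnorm_def f0_def
    by (intro mult_left_mono sum_mono) (auto intro!: mult_nonneg_nonneg weight_nonneg)
  finally show ?thesis .
qed

text \<open>The killed operator is self-adjoint in \<open>L\<^sup>2(w)\<close>, and its quadratic form lies in
  \<open>[-(1 - \<delta>), 1 - \<delta>]\<close> (the lower bound because the kernel is nonnegative), so its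
  norm is at most \<open>1 - \<delta>\<close>.\<close>

lemma killed_form_le_sqnorm_add:
  assumes "poincare_ineq X A w K \<delta>" "\<delta> \<le> 1"
  shows "2 * killed_form X A w K g f \<le> (1 - \<delta>) * (weighted_sqnorm X w g + weighted_sqnorm X w f)"
proof -
  have abs_diag: "\<bar>killed_form X A w K h h\<bar> \<le> (1 - \<delta>) * weighted_sqnorm X w h" for h
    using killed_form_abs_le[of A h] killed_form_le[OF assms, of "\<lambda>x. \<bar>h x\<bar>"]
    by (simp add: weighted_sqnorm_def)
  have "4 * killed_form X A w K g f
      = killed_form X A w K (\<lambda>x. g x + f x) (\<lambda>x. g x + f x)
        - killed_form X A w K (\<lambda>x. g x - f x) (\<lambda>x. g x - f x)"
    using killed_form_polarization[of X A w K g f] killed_form_commute[of A g f] by simp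
  also have "\<dots> \<le> (1 - \<delta>) * (weighted_sqnorm X w (\<lambda>x. g x + f x) + weighted_sqnorm X w (\<lambda>x. g x - f x))"
    using abs_diag[of "\<lambda>x. g x + f x"] abs_diag[of "\<lambda>x. g x - f x"] by (simp add: algebra_simps)
  finally show ?thesis
    unfolding weighted_sqnorm_parallelogram by (simp add: algebra_simps)
qed

lemma killed_op_contraction:
  assumes "poincare_ineq X A w K \<delta>" "\<delta> < 1"
  shows "weighted_sqnorm X w (killed_op X A K h) \<le> (1 - \<delta>)\<^sup>2 * weighted_sqnorm X w h"
proof -
  define \<gamma> where "\<gamma> = 1 - \<delta>"
  have "0 < \<gamma>" using \<open>\<delta> < 1\<close> by (simp add: \<gamma>_def)
  define a where "a = weighted_sqnorm X w (killed_op X A K h)"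
  define b where "b = weighted_sqnorm X w h"
  have "killed_form X A w K (killed_op X A K h) h = a"
    unfolding a_def killed_form_eq_sum_killed_op weighted_sqnorm_def
    by (intro sum.cong refl) (simp add: power2_eq_square)
  then have "2 * (a / \<gamma>) \<le> \<gamma> * (a / \<gamma>\<^sup>2 + b)"
    using killed_form_le_sqnorm_add[OF assms(1), of "\<lambda>y. killed_op X A K h y / \<gamma>" h]
      killed_form_scale_left[of X A w K "1 / \<gamma>"] \<open>\<delta> < 1\<close>
    by (simp add: a_def b_def \<gamma>_def weighted_sqnorm_def power_divide sum_divide_distrib)
  then have "a \<le> \<gamma>\<^sup>2 * b"
    using \<open>0 < \<gamma>\<close> by (simp add: power2_eq_square field_simps)
  then show ?thesis by (simp add: a_def b_def \<gamma>_def)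
qed

text \<open>\<open>v\<close> is the mass of a chain killed on \<open>A\<close> and \<open>v'\<close> its image after one step;
  by reversibility the density \<open>v / w\<close> evolves under \<open>killed_op\<close>.\<close>

lemma killed_step_bound:
  assumes "poincare_ineq X A w K \<delta>" "0 \<le> \<delta>" "\<delta> < 1" "0 \<le> r"
    and w'_pos: "\<And>x. x \<in> X \<Longrightarrow> 0 < w' x"
    and w_le: "\<And>y. y \<in> X \<Longrightarrow> w y \<le> r * w' y"
    and v_vanish: "\<And>x. x \<in> X \<Longrightarrow> x \<in> A \<Longrightarrow> v x = 0"
    and v': "\<And>y. y \<in> X \<Longrightarrow> v' y = (if y \<in> A then 0 else (\<Sum>x\<in>X. v x * K x y))"
  shows "(\<Sum>y\<in>X. (v' y)\<^sup>2 / w' y) \<le> r * (1 - \<delta>)\<^sup>2 * (\<Sum>x\<in>X. (v x)\<^sup>2 / w x)"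
proof -
  define \<phi> where "\<phi> x = v x / w x" for x
  have v'_eq: "v' y = w y * killed_op X A K \<phi> y" if "y \<in> X" for y
  proof -
    have "v x * K x y = w y * (K y x * (if x \<in> A then 0 else \<phi> x))" if "x \<in> X" for x
      using v_vanish[OF \<open>x \<in> X\<close>] reversible[OF \<open>x \<in> X\<close> \<open>y \<in> X\<close>] weight_pos[OF \<open>x \<in> X\<close>]
      by (auto simp: \<phi>_def field_simps)
    then show ?thesis
      using v'[OF \<open>y \<in> X\<close>] by (simp add: killed_op_def sum_distrib_left)
  qed
  have "(\<Sum>y\<in>X. (v' y)\<^sup>2 / w' y) \<le> (\<Sum>y\<in>X. r * (w y * (killed_op X A K \<phi> y)\<^sup>2))"
  proof (rule sum_mono)
    fix y assume "y \<in> X"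
    have "(v' y)\<^sup>2 / w' y = w y / w' y * (w y * (killed_op X A K \<phi> y)\<^sup>2)"
      using v'_eq[OF \<open>y \<in> X\<close>] by (simp add: power2_eq_square)
    also have "\<dots> \<le> r * (w y * (killed_op X A K \<phi> y)\<^sup>2)"
      using w_le[OF \<open>y \<in> X\<close>] w'_pos[OF \<open>y \<in> X\<close>] weight_pos[OF \<open>y \<in> X\<close>]
      by (intro mult_right_mono) (auto simp: divide_le_eq)
    finally show "(v' y)\<^sup>2 / w' y \<le> r * (w y * (killed_op X A K \<phi> y)\<^sup>2)" .
  qed
  also have "\<dots> = r * weighted_sqnorm X w (killed_op X A K \<phi>)"
    by (simp add: weighted_sqnorm_def sum_distrib_left)
  also have "\<dots> \<le> r * ((1 - \<delta>)\<^sup>2 * weighted_sqnorm X w \<phi>)"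
    using killed_op_contraction[OF assms(1,3)] \<open>0 \<le> r\<close> by (intro mult_left_mono) auto
  also have "weighted_sqnorm X w \<phi> = (\<Sum>x\<in>X. (v x)\<^sup>2 / w x)"
    unfolding weighted_sqnorm_def \<phi>_def by (intro sum.cong refl) (simp add: power2_eq_square)
  finally show ?thesis by (simp add: mult.assoc)
qed

lemma dirichlet_form_nonneg: "0 \<le> dirichlet_form X w K f"
  unfolding dirichlet_form_def
  by (intro divide_nonneg_nonneg sum_nonneg mult_nonneg_nonneg weight_nonneg kernel_nonneg) auto

lemma abs_diff_le_sqrt_dirichlet_form:
  assumes "finite X" "u \<in> X" "v \<in> X" "0 < q" "q \<le> w u * K u v"
  shows "\<bar>f u - f v\<bar> \<le> sqrt (2 * dirichlet_form X w K f / q)"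
proof -
  have "q * (f u - f v)\<^sup>2 \<le> w u * K u v * (f u - f v)\<^sup>2"
    using assms(5) by (intro mult_right_mono) auto
  also have "\<dots> \<le> (\<Sum>x\<in>X. w u * K u x * (f u - f x)\<^sup>2)"
    using assms weight_nonneg kernel_nonneg by (intro member_le_sum) auto
  also have "\<dots> \<le> (\<Sum>y\<in>X. \<Sum>x\<in>X. w y * K y x * (f y - f x)\<^sup>2)"
    using assms weight_nonneg kernel_nonneg by (intro member_le_sum sum_nonneg) auto
  finally have "(f u - f v)\<^sup>2 \<le> 2 * dirichlet_form X w K f / q"
    using \<open>0 < q\<close> by (simp add: dirichlet_form_def field_simps)
  then show ?thesis by (metis real_sqrt_abs real_sqrt_le_mono)
qed

text \<open>Canonical paths: every point is joined to \<open>A\<close>, where \<open>f\<close> vanishes, by at most \<open>L\<close>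
  edges of conductance \<open>w u * K u v \<ge> q\<close>, each of which changes \<open>f\<close> by at most
  \<open>sqrt (2 * dirichlet_form X w K f / q)\<close>.\<close>

lemma poincare_from_paths:
  assumes "finite X" and "0 < q" and "0 \<le> W"
    and paths: "\<And>x. x \<in> X \<Longrightarrow>
       \<exists>n y. n \<le> L \<and> y \<in> X \<inter> A \<and> ((\<lambda>u v. u \<in> X \<and> v \<in> X \<and> q \<le> w u * K u v) ^^ n) x y"
    and w_le: "\<And>x. x \<in> X \<Longrightarrow> x \<notin> A \<Longrightarrow> w x \<le> W"
  shows "poincare_ineq X A w K (q / (2 * real (card X) * W * (real L)\<^sup>2))"
  unfolding poincare_ineq_def
proof (intro allI impI)
  fix f :: "'s \<Rightarrow> real" assume f_vanish: "\<forall>x\<in>X. x \<in> A \<longrightarrow> f x = 0"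
  define E where "E = dirichlet_form X w K f"
  have "0 \<le> E" unfolding E_def by (rule dirichlet_form_nonneg)
  have pointwise: "w x * (f x)\<^sup>2 \<le> W * ((real L)\<^sup>2 * (2 * E / q))" if "x \<in> X" for x
  proof (cases "x \<in> A")
    case False
    then obtain n y where "n \<le> L" "y \<in> X \<inter> A"
      and path: "((\<lambda>u v. u \<in> X \<and> v \<in> X \<and> q \<le> w u * K u v) ^^ n) x y"
      using paths \<open>x \<in> X\<close> by blast
    have "\<bar>f x - f y\<bar> \<le> real n * sqrt (2 * E / q)"
      using path by (rule abs_diff_le_relpowp)
        (use abs_diff_le_sqrt_dirichlet_form[OF \<open>finite X\<close> _ _ \<open>0 < q\<close>] in \<open>auto simp: E_def\<close>)
    also have "\<dots> \<le> real L * sqrt (2 * E / q)"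
      using \<open>n \<le> L\<close> \<open>0 \<le> E\<close> \<open>0 < q\<close> by (intro mult_right_mono) auto
    finally have "\<bar>f x\<bar>\<^sup>2 \<le> (real L * sqrt (2 * E / q))\<^sup>2"
      using f_vanish \<open>y \<in> X \<inter> A\<close> by (intro power_mono) auto
    also have "\<dots> = (real L)\<^sup>2 * (2 * E / q)"
      using \<open>0 \<le> E\<close> \<open>0 < q\<close> by (simp add: power_mult_distrib)
    finally show ?thesis
      using weight_nonneg[OF \<open>x \<in> X\<close>] w_le[OF \<open>x \<in> X\<close> False] \<open>0 \<le> E\<close> \<open>0 < q\<close>
      by (intro mult_mono) auto
  qed (use that f_vanish \<open>0 \<le> W\<close> \<open>0 \<le> E\<close> \<open>0 < q\<close> in simp)
  define C where "C = real (card X) * W * (real L)\<^sup>2"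
  have "0 \<le> C" using \<open>0 \<le> W\<close> by (simp add: C_def)
  have bound: "weighted_sqnorm X w f \<le> C * (2 * E / q)"
    unfolding weighted_sqnorm_def C_def using sum_mono[OF pointwise] by (simp add: mult_ac)
  have "q / (2 * C) * weighted_sqnorm X w f \<le> E"
  proof (cases "C = 0")
    case False
    then have "q / (2 * C) * weighted_sqnorm X w f \<le> q / (2 * C) * (C * (2 * E / q))"
      using bound \<open>0 < q\<close> \<open>0 \<le> C\<close> by (intro mult_left_mono) auto
    also have "\<dots> = E" using False \<open>0 < q\<close> by (simp add: field_simps)
    finally show ?thesis .
  qed (use \<open>0 \<le> E\<close> in simp)
  then show "q / (2 * real (card X) * W * (real L)\<^sup>2) * weighted_sqnorm X w f \<le> dirichlet_form X w K f"
    by (simp add: E_def C_def mult.assoc)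
qed

end

lemma pmf_sa_step_off_diag:
  assumes "finite (G x)" "G x \<noteq> {}" "0 < T m" "y \<noteq> x"
  shows "pmf (sa_step E G T m x) y
           = (if y \<in> G x then exp (- max 0 (E y - E x) / T m) / real (card (G x)) else 0)"
proof -
  have inner: "pmf (let dE = E s' - E x in
                 if dE \<le> 0 then return_pmf s'
                 else map_pmf (\<lambda>b. if b then s' else x) (bernoulli_pmf (exp (- dE / T m)))) y
             = (if s' = y then exp (- max 0 (E y - E x) / T m) else 0)" for s'
  proof (cases "E s' - E x \<le> 0")
    case True
    then show ?thesis by (auto simp: indicator_def max_def)
  next
    case False
    have "exp (- (E s' - E x) / T m) \<le> 1"
      using False \<open>0 < T m\<close> by (simp add: divide_nonpos_pos)
    moreover have "(\<lambda>b. if b then s' else x) -` {y} = (if s' = y then {True} else {})"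
      using \<open>y \<noteq> x\<close> by (auto split: if_splits)
    moreover have "max 0 (E s' - E x) = E s' - E x"
      using False by simp
    ultimately show ?thesis
      using False by (auto simp: Let_def pmf_map measure_pmf_single diff_divide_distrib)
  qed
  show ?thesis
    unfolding sa_step_def pmf_bind_pmf_of_set[OF assms(2,1)] inner
    using assms(1) by simp
qed

lemma set_pmf_sa_step:
  assumes "finite (G x)" "G x \<noteq> {}"
  shows "set_pmf (sa_step E G T m x) \<subseteq> insert x (G x)"
  using assms unfolding sa_step_def by (auto simp: Let_def split: if_splits)

lemma sa_run_last:
  assumes "init \<in> X" and closed: "\<And>m x. x \<in> X \<Longrightarrow> set_pmf (sa_step E G T m x) \<subseteq> X"
    and "xs \<in> set_pmf (sa_run E G T init k)"
  shows "xs \<noteq> [] \<and> last xs \<in> X"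
  using assms(3)
proof (induction k arbitrary: xs)
  case 0
  then show ?case using \<open>init \<in> X\<close> by simp
next
  case (Suc k)
  then show ?case using closed by force
qed

lemma prob_visit_eq_1_minus_prob_avoid:
  "measure_pmf.prob P {xs. \<exists>s \<in> set xs. s \<in> M} = 1 - measure_pmf.prob P {xs. set xs \<inter> M = {}}"
proof -
  have visit: "{xs. \<exists>s \<in> set xs. s \<in> M} = space (measure_pmf P) - {xs. set xs \<inter> M = {}}"
    by auto
  show ?thesis
    unfolding visit by (rule measure_pmf.prob_compl) simp
qed

definition survivor ::
  "('s \<Rightarrow> real) \<Rightarrow> ('s \<Rightarrow> 's set) \<Rightarrow> (nat \<Rightarrow> real) \<Rightarrow> 's \<Rightarrow> 's set \<Rightarrow> nat \<Rightarrow> 's option pmf" where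
  "survivor E G T init A k =
     map_pmf (\<lambda>xs. if set xs \<inter> A = {} then Some (last xs) else None) (sa_run E G T init k)"

lemma survivor_Suc:
  "survivor E G T init A (Suc k) =
     bind_pmf (survivor E G T init A k) (\<lambda>z. case z of
       None \<Rightarrow> return_pmf None
     | Some x \<Rightarrow> map_pmf (\<lambda>y. if y \<in> A then None else Some y) (sa_step E G T k x))"
  unfolding survivor_def sa_run.simps map_bind_pmf bind_map_pmf map_pmf_comp
proof (rule bind_pmf_cong[OF refl])
  fix xs
  show "map_pmf (\<lambda>y. if set (xs @ [y]) \<inter> A = {} then Some (last (xs @ [y])) else None)
          (sa_step E G T k (last xs))
      = (case if set xs \<inter> A = {} then Some (last xs) else None of
           None \<Rightarrow> return_pmf None
         | Some x \<Rightarrow> map_pmf (\<lambda>y. if y \<in> A then None else Some y) (sa_step E G T k x))"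
  proof (cases "set xs \<inter> A = {}")
    case True
    then show ?thesis by (auto intro!: map_pmf_cong)
  next
    case False
    then have "map_pmf (\<lambda>y. if set (xs @ [y]) \<inter> A = {} then Some (last (xs @ [y])) else None)
                 (sa_step E G T k (last xs))
             = map_pmf (\<lambda>_. None) (sa_step E G T k (last xs))"
      by (intro map_pmf_cong) auto
    with False show ?thesis by simp
  qed
qed

lemma set_pmf_survivor:
  assumes "init \<in> X" and "\<And>m x. x \<in> X \<Longrightarrow> set_pmf (sa_step E G T m x) \<subseteq> X"
  shows "set_pmf (survivor E G T init A k) \<subseteq> insert None (Some ` X)"
  unfolding survivor_def using sa_run_last[OF assms] by auto

lemma pmf_survivor_0: "pmf (survivor E G T init A 0) (Some y) = (if y = init \<and> init \<notin> A then 1 else 0)"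
  unfolding survivor_def by (auto simp: indicator_def)

lemma pmf_survivor_Suc:
  assumes "finite X" "init \<in> X" and closed: "\<And>m x. x \<in> X \<Longrightarrow> set_pmf (sa_step E G T m x) \<subseteq> X"
  shows "pmf (survivor E G T init A (Suc k)) (Some y) =
    (if y \<in> A then 0 else (\<Sum>x\<in>X. pmf (survivor E G T init A k) (Some x) * pmf (sa_step E G T k x) y))"
proof -
  define step where "step z = (case z of
       None \<Rightarrow> return_pmf None
     | Some x \<Rightarrow> map_pmf (\<lambda>y. if y \<in> A then None else Some y) (sa_step E G T k x))" for z
  have step_Some: "pmf (step (Some x)) (Some y) = (if y \<in> A then 0 else pmf (sa_step E G T k x) y)" for x
  proof -
    have "(\<lambda>y. if y \<in> A then None else Some y) -` {Some y} = (if y \<in> A then {} else {y})"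
      by (auto split: if_splits)
    then show ?thesis unfolding step_def by (simp add: pmf_map measure_pmf_single)
  qed
  have "pmf (survivor E G T init A (Suc k)) (Some y)
      = measure_pmf.expectation (survivor E G T init A k) (\<lambda>z. pmf (step z) (Some y))"
    unfolding survivor_Suc step_def[symmetric] pmf_bind ..
  also have "\<dots> = (\<Sum>z\<in>Some ` X. pmf (step z) (Some y) * pmf (survivor E G T init A k) z)"
  proof (rule integral_measure_pmf_real)
    fix z assume "z \<in> set_pmf (survivor E G T init A k)" "pmf (step z) (Some y) \<noteq> 0"
    then show "z \<in> Some ` X"
      using set_pmf_survivor[OF assms(2) closed] by (cases z) (auto simp: step_def)
  qed (use \<open>finite X\<close> in simp)
  also have "\<dots> = (\<Sum>x\<in>X. pmf (step (Some x)) (Some y) * pmf (survivor E G T init A k) (Some x))"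
    by (simp add: sum.reindex)
  finally show ?thesis
    unfolding step_Some by (auto simp: mult.commute)
qed

lemma prob_avoid_eq_sum_survivor:
  assumes "finite X" "init \<in> X" "\<And>m x. x \<in> X \<Longrightarrow> set_pmf (sa_step E G T m x) \<subseteq> X"
  shows "measure_pmf.prob (sa_run E G T init k) {xs. set xs \<inter> A = {}}
           = (\<Sum>x\<in>X. pmf (survivor E G T init A k) (Some x))"
proof -
  let ?Z = "survivor E G T init A k"
  have "measure_pmf.prob (sa_run E G T init k) {xs. set xs \<inter> A = {}} = measure_pmf.prob ?Z (range Some)"
    unfolding survivor_def by (simp add: vimage_def)
  also have "\<dots> = measure_pmf.prob ?Z (Some ` X)"
    using set_pmf_survivor[OF assms(2,3), of A k]
    by (intro measure_pmf.finite_measure_eq_AE AE_pmfI) auto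
  also have "\<dots> = (\<Sum>x\<in>X. pmf ?Z (Some x))"
    using \<open>finite X\<close> by (simp add: measure_measure_pmf_finite sum.reindex)
  finally show ?thesis .
qed

lemma exp_neg_le_power:
  fixes y :: real
  assumes "0 < y" "0 < n"
  shows "exp (- y) \<le> (real n / y) ^ n"
proof -
  have "(y / real n) ^ n \<le> (1 + y / real n) ^ n"
    using assms by (intro power_mono) auto
  also have "\<dots> \<le> exp y"
    using assms by (intro exp_ge_one_plus_x_over_n_power_n) auto
  finally have "(y / real n) ^ n \<le> exp y" .
  moreover have "0 < (y / real n) ^ n" using assms by simp
  ultimately have "1 / exp y \<le> 1 / (y / real n) ^ n"
    by (intro divide_left_mono) auto
  then show ?thesis
    by (simp add: exp_minus power_divide inverse_eq_divide)
qed

lemma exp_neg_powr_le_powr: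
  fixes b e r :: real
  assumes "0 < b" "0 < e"
  obtains C where "0 < C" "\<And>x. 1 \<le> x \<Longrightarrow> exp (- (b * x powr e)) \<le> C * x powr (- r)"
proof
  define n where "n = nat \<lceil>r / e\<rceil> + 1"
  have "0 < n" by (simp add: n_def)
  have "r / e \<le> real n" unfolding n_def by linarith
  then have "r \<le> e * real n"
    using \<open>0 < e\<close> by (simp add: divide_le_eq mult.commute)
  show "0 < (real n / b) ^ n" using \<open>0 < b\<close> \<open>0 < n\<close> by simp
  fix x :: real assume "1 \<le> x"
  have "exp (- (b * x powr e)) \<le> (real n / (b * x powr e)) ^ n"
    using \<open>0 < b\<close> \<open>1 \<le> x\<close> \<open>0 < n\<close> by (intro exp_neg_le_power) auto
  also have "\<dots> = (real n / b) ^ n * x powr (- (e * real n))"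
    using \<open>1 \<le> x\<close> by (simp add: powr_minus powr_realpow[symmetric] powr_powr field_simps)
  also have "\<dots> \<le> (real n / b) ^ n * x powr (- r)"
    using \<open>0 < b\<close> \<open>1 \<le> x\<close> \<open>r \<le> e * real n\<close> by (intro mult_left_mono powr_mono) auto
  finally show "exp (- (b * x powr e)) \<le> (real n / b) ^ n * x powr (- r)" .
qed

lemma linear_times_exp_neg_le_powr:
  fixes b \<alpha> r :: real
  assumes "0 < b" "0 \<le> \<alpha>" "\<alpha> < 1"
  obtains C where "0 < C"
    "\<And>k::nat. 1 \<le> k \<Longrightarrow> (2 + real k) * exp (- (b * real k * (2 + real k) powr (- \<alpha>))) \<le> C * real k powr (- r)"
proof -
  obtain C where "0 < C"
    and C: "\<And>x. 1 \<le> x \<Longrightarrow> exp (- (b / 3 * x powr (1 - \<alpha>))) \<le> C * x powr (- (r + 1))"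
    using exp_neg_powr_le_powr[of "b / 3" "1 - \<alpha>" "r + 1"] assms by auto
  show ?thesis
  proof (rule that[of "3 * C"])
    show "0 < 3 * C" using \<open>0 < C\<close> by simp
    fix k :: nat assume "1 \<le> k"
    define x where "x = real k"
    have "1 \<le> x" using \<open>1 \<le> k\<close> by (simp add: x_def)
    have "(3::real) powr (- 1) \<le> 3 powr (- \<alpha>)"
      using \<open>\<alpha> < 1\<close> by (intro powr_mono) auto
    then have "1 / 3 * x powr (- \<alpha>) \<le> 3 powr (- \<alpha>) * x powr (- \<alpha>)"
      by (intro mult_right_mono) (auto simp: powr_minus_divide)
    also have "\<dots> = (3 * x) powr (- \<alpha>)"
      using \<open>1 \<le> x\<close> by (simp add: powr_mult)
    also have "\<dots> \<le> (2 + x) powr (- \<alpha>)"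
      using \<open>1 \<le> x\<close> \<open>0 \<le> \<alpha>\<close> by (intro powr_mono2') auto
    finally have "b / 3 * x powr (1 - \<alpha>) \<le> b * x * (2 + x) powr (- \<alpha>)"
      using \<open>0 < b\<close> \<open>1 \<le> x\<close> by (simp add: powr_diff powr_minus field_simps)
    then have "exp (- (b * x * (2 + x) powr (- \<alpha>))) \<le> C * x powr (- (r + 1))"
      using C[OF \<open>1 \<le> x\<close>] by (meson exp_le_cancel_iff neg_le_iff_le order_trans)
    moreover have "2 + x \<le> 3 * x" using \<open>1 \<le> x\<close> by simp
    ultimately have "(2 + x) * exp (- (b * x * (2 + x) powr (- \<alpha>))) \<le> 3 * x * (C * x powr (- (r + 1)))"
      by (intro mult_mono) auto
    also have "\<dots> = 3 * C * (x powr 1 * x powr (- (r + 1)))"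
      using \<open>1 \<le> x\<close> by simp
    also have "\<dots> = 3 * C * x powr (- r)"
      by (subst powr_add[symmetric]) simp
    finally show "(2 + real k) * exp (- (b * real k * (2 + real k) powr (- \<alpha>))) \<le> 3 * C * real k powr (- r)"
      by (simp add: x_def)
  qed
qed

lemma powr_neg_less_div_powr:
  fixes A x W r :: real
  assumes "0 < A" "1 \<le> x" "1 \<le> W" "0 \<le> r"
  shows "A * x powr (- r) < 2 * A / (x / W) powr r"
proof -
  have "(x / W) powr r \<le> x powr r"
    using assms by (intro powr_mono2) (auto simp: divide_le_eq)
  moreover have "0 < (x / W) powr r" "0 < x powr r"
    using assms by auto
  ultimately have "2 * A / x powr r \<le> 2 * A / (x / W) powr r"
    using \<open>0 < A\<close> by (intro divide_left_mono) auto
  moreover have "A * x powr (- r) < 2 * A / x powr r"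
    using \<open>0 < A\<close> \<open>0 < x powr r\<close> by (simp add: powr_minus divide_inverse)
  ultimately show ?thesis by linarith
qed

locale annealing =
  fixes X :: "'s set" and G :: "'s \<Rightarrow> 's set" and c :: "'s \<Rightarrow> real"
    and d L :: nat and H T0 :: real
  assumes finite_X: "finite X"
    and nbhd_subset: "x \<in> X \<Longrightarrow> G x \<subseteq> X"
    and nbhd_nonempty: "x \<in> X \<Longrightarrow> G x \<noteq> {}"
    and card_nbhd_le: "x \<in> X \<Longrightarrow> card (G x) \<le> d"
    and nbhd_irrefl: "x \<in> X \<Longrightarrow> x \<notin> G x"
    and nbhd_sym: "x \<in> X \<Longrightarrow> y \<in> X \<Longrightarrow> y \<in> G x \<longleftrightarrow> x \<in> G y"
    and connected: "x \<in> X \<Longrightarrow> y \<in> X \<Longrightarrow> \<exists>n \<le> L. ((\<lambda>u v. u \<in> X \<and> v \<in> G u) ^^ n) x y"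
    and cost_nonneg: "x \<in> X \<Longrightarrow> 0 \<le> c x"
    and cost_le: "x \<in> X \<Longrightarrow> c x \<le> H"
    and H_pos: "0 < H"
    and H_le_T0: "H \<le> T0"
begin

abbreviation temp :: "nat \<Rightarrow> real" where
  "temp \<equiv> \<lambda>m. T0 / ln (2 + real m)"

abbreviation global_mins :: "'s set" where
  "global_mins \<equiv> {s. is_global_min c X s}"

definition step_kernel :: "nat \<Rightarrow> 's \<Rightarrow> 's \<Rightarrow> real" where
  "step_kernel m x y = pmf (sa_step c G temp m x) y"

text \<open>Reversing measure of \<open>step_kernel m\<close>; the factor \<open>card (G x)\<close> compensates the
  uniform proposal on \<open>G x\<close>.\<close>

definition weight :: "nat \<Rightarrow> 's \<Rightarrow> real" where
  "weight m x = real (card (G x)) * exp (- c x / temp m)"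

lemma T0_pos: "0 < T0"
  using H_pos H_le_T0 by simp

lemma temp_pos: "0 < temp m"
  using T0_pos by (simp add: ln_gt_zero)

lemma exp_div_temp: "exp (- z / temp m) = (2 + real m) powr (- z / T0)"
  using T0_pos by (simp add: powr_def field_simps)

lemma finite_nbhd: "x \<in> X \<Longrightarrow> finite (G x)"
  using finite_subset[OF nbhd_subset finite_X] .

lemma card_nbhd_pos: "x \<in> X \<Longrightarrow> 0 < card (G x)"
  using finite_nbhd nbhd_nonempty by (simp add: card_gt_0_iff)

lemma card_X_pos_and_d_pos:
  assumes "x \<in> X"
  shows "0 < card X \<and> 0 < d"
proof
  show "0 < card X" using assms finite_X by (auto simp: card_gt_0_iff)
  show "0 < d" using card_nbhd_pos[OF assms] card_nbhd_le[OF assms] by linarith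
qed

lemma sa_step_closed: "x \<in> X \<Longrightarrow> set_pmf (sa_step c G temp m x) \<subseteq> X"
  using set_pmf_sa_step[of G x c temp m] finite_nbhd[of x] nbhd_nonempty[of x] nbhd_subset[of x]
  by blast

lemma step_kernel_nonneg: "0 \<le> step_kernel m x y"
  unfolding step_kernel_def by simp

lemma step_kernel_stochastic: "x \<in> X \<Longrightarrow> (\<Sum>y\<in>X. step_kernel m x y) = 1"
  unfolding step_kernel_def by (rule sum_pmf_eq_1[OF finite_X sa_step_closed])

lemma weight_pos: "x \<in> X \<Longrightarrow> 0 < weight m x"
  unfolding weight_def using card_nbhd_pos by simp

lemma weight_kernel_eq:
  assumes "x \<in> X" "x \<noteq> y"
  shows "weight m x * step_kernel m x y = (if y \<in> G x then exp (- max (c x) (c y) / temp m) else 0)"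
proof -
  have "exp (- c x / temp m) * exp (- max 0 (c y - c x) / temp m) = exp (- max (c x) (c y) / temp m)"
    by (simp add: exp_add[symmetric] max_def diff_divide_distrib left_diff_distrib)
  then show ?thesis
    using card_nbhd_pos[OF \<open>x \<in> X\<close>] assms
      pmf_sa_step_off_diag[of G x temp m y c, OF finite_nbhd nbhd_nonempty temp_pos]
    by (simp add: weight_def step_kernel_def)
qed

lemma weight_kernel_sym: "x \<in> X \<Longrightarrow> y \<in> X \<Longrightarrow> weight m x * step_kernel m x y = weight m y * step_kernel m y x"
  by (cases "x = y") (simp_all add: weight_kernel_eq nbhd_sym max.commute)

lemma weight_le_weight_Suc: "x \<in> X \<Longrightarrow> weight m x \<le> (3 + real m) / (2 + real m) * weight (Suc m) x"
proof -
  assume "x \<in> X"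
  have "c x / T0 \<le> 1" "0 \<le> c x / T0"
    using cost_nonneg[OF \<open>x \<in> X\<close>] cost_le[OF \<open>x \<in> X\<close>] H_le_T0 T0_pos by auto
  then have "((3 + real m) / (2 + real m)) powr (c x / T0) \<le> ((3 + real m) / (2 + real m)) powr 1"
    by (intro powr_mono) auto
  then have "(2 + real m) powr (- c x / T0)
             \<le> (3 + real m) / (2 + real m) * (3 + real m) powr (- c x / T0)"
    by (simp add: powr_divide powr_minus divide_simps mult.commute)
  then have "weight m x \<le> real (card (G x)) * ((3 + real m) / (2 + real m) * (3 + real m) powr (- c x / T0))"
    unfolding weight_def exp_div_temp by (intro mult_left_mono) auto
  also have "\<dots> = (3 + real m) / (2 + real m) * weight (Suc m) x"
    unfolding weight_def exp_div_temp by (simp add: add.assoc[symmetric])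
  finally show ?thesis .
qed

lemma global_mins_nonempty: "X \<noteq> {} \<Longrightarrow> global_mins \<noteq> {}"
  using finite_X arg_min_if_finite(1,2)[of X c] by (force simp: is_global_min_def not_less)

text \<open>The least cost \<open>\<kappa>\<close> of a non-minimiser is positive, as it exceeds the
  nonnegative minimum; hence \<open>\<alpha> < 1\<close> even when \<open>T0 = H\<close>. \<open>gap m\<close> is the constant
  that \<open>poincare_from_paths\<close> yields for step \<open>m\<close>, with edge conductance at least
  \<open>exp (- H / temp m)\<close> and weights at most \<open>d * exp (- \<kappa> / temp m)\<close> off the minimisers.\<close>

definition \<kappa> :: real where
  "\<kappa> = (if X - global_mins = {} then H else Min (c ` (X - global_mins)))"

definition \<alpha> :: real where
  "\<alpha> = (H - \<kappa>) / T0"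

definition \<beta> :: real where
  "\<beta> = 1 / (2 * real (card X) * real d * (real L)\<^sup>2)"

definition gap :: "nat \<Rightarrow> real" where
  "gap m = \<beta> * (2 + real m) powr (- \<alpha>)"

lemma \<kappa>_le_cost: "x \<in> X \<Longrightarrow> x \<notin> global_mins \<Longrightarrow> \<kappa> \<le> c x"
  unfolding \<kappa>_def using finite_X by (auto intro!: Min_le)

lemma \<kappa>_pos: "0 < \<kappa>"
proof (cases "X - global_mins = {}")
  case True
  then show ?thesis unfolding \<kappa>_def using H_pos by simp
next
  case False
  then obtain x where x: "x \<in> X - global_mins" "c x = Min (c ` (X - global_mins))"
    using Min_in[of "c ` (X - global_mins)"] finite_X by fastforce
  then obtain y where "y \<in> X" "c y < c x"
    unfolding is_global_min_def by (auto simp: not_le)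
  then show ?thesis
    using False x cost_nonneg[of y] unfolding \<kappa>_def by simp
qed

lemma \<kappa>_le_H: "\<kappa> \<le> H"
proof (cases "X - global_mins = {}")
  case True
  then show ?thesis unfolding \<kappa>_def by simp
next
  case False
  then obtain x where "x \<in> X" "x \<notin> global_mins" by blast
  then show ?thesis using \<kappa>_le_cost cost_le order_trans by blast
qed

lemma \<alpha>_nonneg: "0 \<le> \<alpha>"
  unfolding \<alpha>_def using \<kappa>_le_H T0_pos by simp

lemma \<alpha>_less_1: "\<alpha> < 1"
  unfolding \<alpha>_def using \<kappa>_pos H_le_T0 T0_pos by (simp add: divide_less_eq)

lemma gap_nonneg: "0 \<le> gap m"
  unfolding gap_def \<beta>_def by simp

lemma gap_less_1: "gap m < 1"
proof -
  have "\<beta> \<le> 1 / 2"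
  proof (cases "card X = 0 \<or> d = 0 \<or> L = 0")
    case False
    then have "1 * (1 * 1) \<le> real d * (real (card X) * (real L)\<^sup>2)"
      by (intro mult_mono) auto
    then show ?thesis by (simp add: \<beta>_def field_simps)
  qed (auto simp: \<beta>_def)
  moreover have "(2 + real m) powr (- \<alpha>) \<le> 1"
    using \<alpha>_nonneg by (simp add: powr_minus_divide ge_one_powr_ge_zero)
  ultimately have "gap m \<le> 1 / 2 * 1"
    unfolding gap_def by (intro mult_mono) (auto simp: \<beta>_def)
  then show ?thesis by simp
qed

lemma conductance_ge:
  assumes "u \<in> X" "v \<in> G u"
  shows "exp (- H / temp m) \<le> weight m u * step_kernel m u v"
proof -
  have "- H / temp m \<le> - max (c u) (c v) / temp m"
    using assms cost_le nbhd_subset temp_pos[of m] by (intro divide_right_mono) auto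
  moreover have "u \<noteq> v" using assms nbhd_irrefl by blast
  ultimately show ?thesis
    using assms weight_kernel_eq[of u v m] by simp
qed

lemma path_to_global_min:
  assumes "x \<in> X"
  shows "\<exists>n y. n \<le> L \<and> y \<in> X \<inter> global_mins \<and>
    ((\<lambda>u v. u \<in> X \<and> v \<in> X \<and> exp (- H / temp m) \<le> weight m u * step_kernel m u v) ^^ n) x y"
proof -
  obtain g where "g \<in> global_mins" using global_mins_nonempty assms by blast
  then have "g \<in> X" by (simp add: is_global_min_def)
  then obtain n where "n \<le> L" and path: "((\<lambda>u v. u \<in> X \<and> v \<in> G u) ^^ n) x g"
    using connected[OF assms] by blast
  have "((\<lambda>u v. u \<in> X \<and> v \<in> X \<and> exp (- H / temp m) \<le> weight m u * step_kernel m u v) ^^ n) x g"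
    by (rule relpowp_mono[OF _ path]) (use conductance_ge nbhd_subset in blast)
  then show ?thesis using \<open>n \<le> L\<close> \<open>g \<in> global_mins\<close> \<open>g \<in> X\<close> by blast
qed

lemma weight_le_off_global_mins:
  assumes "x \<in> X" "x \<notin> global_mins"
  shows "weight m x \<le> real d * exp (- \<kappa> / temp m)"
proof -
  have "- c x / temp m \<le> - \<kappa> / temp m"
    using \<kappa>_le_cost[OF assms] temp_pos[of m] by (intro divide_right_mono) auto
  then show ?thesis
    unfolding weight_def using card_nbhd_le[OF assms(1)] by (intro mult_mono) auto
qed

lemma reversible_kernel_step: "reversible_kernel X (weight m) (step_kernel m)"
  by unfold_locales (simp_all add: weight_pos step_kernel_nonneg step_kernel_stochastic weight_kernel_sym)

lemma poincare_gap: "poincare_ineq X global_mins (weight m) (step_kernel m) (gap m)"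
proof -
  define q where "q = exp (- H / temp m)"
  define e where "e = exp (- \<kappa> / temp m)"
  have "poincare_ineq X global_mins (weight m) (step_kernel m)
          (q / (2 * real (card X) * (real d * e) * (real L)\<^sup>2))"
    using finite_X path_to_global_min weight_le_off_global_mins
    by (intro reversible_kernel.poincare_from_paths[OF reversible_kernel_step]) (auto simp: q_def e_def)
  moreover have "q / (2 * real (card X) * (real d * e) * (real L)\<^sup>2) = \<beta> * (q / e)"
    unfolding \<beta>_def using exp_gt_zero[of "- \<kappa> / temp m"] by (simp add: e_def[symmetric])
  moreover have "q / e = exp (- (H - \<kappa>) / temp m)"
    unfolding q_def e_def by (simp add: exp_diff[symmetric] diff_divide_distrib left_diff_distrib)
  moreover have "\<dots> = (2 + real m) powr (- \<alpha>)"
    unfolding exp_div_temp \<alpha>_def by (simp add: diff_divide_distrib)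
  ultimately show ?thesis
    by (simp add: gap_def)
qed

definition mass :: "'s \<Rightarrow> nat \<Rightarrow> 's \<Rightarrow> real" where
  "mass init k y = pmf (survivor c G temp init global_mins k) (Some y)"

definition energy :: "'s \<Rightarrow> nat \<Rightarrow> real" where
  "energy init k = (\<Sum>y\<in>X. (mass init k y)\<^sup>2 / weight k y)"

lemma mass_Suc:
  "init \<in> X \<Longrightarrow> mass init (Suc k) y
     = (if y \<in> global_mins then 0 else (\<Sum>x\<in>X. mass init k x * step_kernel k x y))"
  unfolding mass_def step_kernel_def by (rule pmf_survivor_Suc[OF finite_X _ sa_step_closed])

lemma mass_global_min:
  assumes "init \<in> X" "y \<in> global_mins"
  shows "mass init k y = 0"
proof (cases k)
  case 0
  with assms(2) show ?thesis unfolding mass_def by (simp only: pmf_survivor_0) auto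
qed (use assms in \<open>simp add: mass_Suc\<close>)

lemma energy_nonneg: "0 \<le> energy init k"
  unfolding energy_def using weight_pos by (intro sum_nonneg divide_nonneg_pos) auto

lemma energy_Suc_le:
  assumes "init \<in> X"
  shows "energy init (Suc k) \<le> (3 + real k) / (2 + real k) * (1 - gap k)\<^sup>2 * energy init k"
  unfolding energy_def
proof (rule reversible_kernel.killed_step_bound[OF reversible_kernel_step poincare_gap])
  show "\<And>x. x \<in> X \<Longrightarrow> x \<in> global_mins \<Longrightarrow> mass init k x = 0"
    using mass_global_min[OF assms] by blast
  show "\<And>y. y \<in> X \<Longrightarrow> mass init (Suc k) y
          = (if y \<in> global_mins then 0 else \<Sum>x\<in>X. mass init k x * step_kernel k x y)"
    using mass_Suc[OF assms] by blast
qed (use weight_pos gap_nonneg gap_less_1 weight_le_weight_Suc in auto)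

lemma energy_0_le: "init \<in> X \<Longrightarrow> energy init 0 \<le> 2"
proof -
  assume "init \<in> X"
  have "energy init 0 \<le> (\<Sum>y\<in>X. if y = init then 1 / weight 0 y else 0)"
    unfolding energy_def mass_def pmf_survivor_0
    using weight_pos by (intro sum_mono) (auto simp: less_imp_le)
  also have "\<dots> = 1 / weight 0 init"
    using \<open>init \<in> X\<close> finite_X by simp
  also have "\<dots> \<le> 2"
  proof -
    have "c init / T0 \<le> 1"
      using cost_le[OF \<open>init \<in> X\<close>] H_le_T0 T0_pos by simp
    then have "2 powr (- 1) \<le> (2::real) powr (- c init / T0)"
      by (intro powr_mono) auto
    then have "1 * (1 / 2) \<le> weight 0 init"
      unfolding weight_def exp_div_temp using card_nbhd_pos[OF \<open>init \<in> X\<close>]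
      by (intro mult_mono) (auto simp: powr_minus)
    then show ?thesis
      using weight_pos[OF \<open>init \<in> X\<close>] by (simp add: divide_le_eq)
  qed
  finally show ?thesis .
qed

lemma energy_le: "init \<in> X \<Longrightarrow> energy init k \<le> (2 + real k) * exp (- (\<Sum>j<k. gap j))"
proof (induction k)
  case 0
  then show ?case using energy_0_le by simp
next
  case (Suc k)
  have "(1 - gap k)\<^sup>2 \<le> 1 - gap k"
    using gap_nonneg[of k] gap_less_1[of k] by (simp add: power2_eq_square mult_left_le)
  also have "\<dots> \<le> exp (- gap k)"
    using exp_ge_add_one_self[of "- gap k"] by simp
  finally have "(1 - gap k)\<^sup>2 \<le> exp (- gap k)" .
  have "energy init (Suc k) \<le> (3 + real k) / (2 + real k) * (1 - gap k)\<^sup>2 * energy init k"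
    by (rule energy_Suc_le[OF Suc.prems])
  also have "\<dots> \<le> (3 + real k) / (2 + real k) * exp (- gap k) * ((2 + real k) * exp (- (\<Sum>j<k. gap j)))"
    using \<open>(1 - gap k)\<^sup>2 \<le> exp (- gap k)\<close> Suc energy_nonneg
    by (intro mult_mono mult_left_mono) auto
  also have "\<dots> = (2 + real (Suc k)) * exp (- (\<Sum>j<Suc k. gap j))"
    by (simp add: exp_add[symmetric] field_simps)
  finally show ?case .
qed

lemma prob_avoid_le_sqrt_energy:
  assumes "init \<in> X"
  shows "measure_pmf.prob (sa_run c G temp init k) {xs. set xs \<inter> global_mins = {}}
           \<le> sqrt (real (card X) * real d * energy init k)"
proof -
  have weight_le: "weight k y \<le> real d" if "y \<in> X" for y
  proof -
    have "0 \<le> c y / temp k"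
      by (rule divide_nonneg_pos[OF cost_nonneg[OF that] temp_pos])
    then have "exp (- c y / temp k) \<le> 1"
      by (simp only: minus_divide_left[symmetric] exp_le_one_iff neg_le_0_iff_le)
    then show ?thesis
      unfolding weight_def using card_nbhd_le[OF that] by (simp add: mult_le_one mult_le_cancel_left1
          order_trans[OF mult_left_le])
  qed
  have "(\<Sum>y\<in>X. mass init k y)\<^sup>2 = (\<Sum>y\<in>X. sqrt (weight k y) * (mass init k y / sqrt (weight k y)))\<^sup>2"
    using weight_pos[of _ k] by (intro arg_cong[where f = "\<lambda>z. z\<^sup>2"] sum.cong refl) force
  also have "\<dots> \<le> (\<Sum>y\<in>X. (sqrt (weight k y))\<^sup>2) * (\<Sum>y\<in>X. (mass init k y / sqrt (weight k y))\<^sup>2)"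
    by (rule Cauchy_Schwarz_ineq_sum)
  also have "(\<Sum>y\<in>X. (mass init k y / sqrt (weight k y))\<^sup>2) = energy init k"
    unfolding energy_def by (intro sum.cong refl) (simp add: power_divide weight_pos[THEN less_imp_le])
  also have "(\<Sum>y\<in>X. (sqrt (weight k y))\<^sup>2) \<le> (\<Sum>y\<in>X. real d)"
    using weight_pos weight_le by (intro sum_mono) (simp add: less_imp_le)
  also have "(\<Sum>y\<in>X. real d) * energy init k = real (card X) * real d * energy init k"
    by simp
  finally have "(\<Sum>y\<in>X. mass init k y)\<^sup>2 \<le> real (card X) * real d * energy init k"
    using energy_nonneg by (simp add: mult_right_mono)
  then have "(\<Sum>y\<in>X. mass init k y) \<le> sqrt (real (card X) * real d * energy init k)"
    by (simp add: real_le_rsqrt)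
  then show ?thesis
    unfolding mass_def by (subst prob_avoid_eq_sum_survivor[OF finite_X assms sa_step_closed])
qed

lemma sum_gap_ge: "\<beta> * real k * (2 + real k) powr (- \<alpha>) \<le> (\<Sum>j<k. gap j)"
proof -
  have "gap k \<le> gap j" if "j < k" for j
    unfolding gap_def \<beta>_def using that \<alpha>_nonneg by (intro mult_left_mono powr_mono2') auto
  then have "(\<Sum>j<k. gap k) \<le> (\<Sum>j<k. gap j)" by (intro sum_mono) auto
  then show ?thesis by (simp add: gap_def mult_ac)
qed

lemma prob_avoid_global_min_le:
  assumes "init \<in> X"
  shows "measure_pmf.prob (sa_run c G temp init k) {xs. set xs \<inter> global_mins = {}}
    \<le> sqrt (real (card X) * real d * ((2 + real k) * exp (- (\<beta> * real k * (2 + real k) powr (- \<alpha>)))))"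
proof -
  have "energy init k \<le> (2 + real k) * exp (- (\<beta> * real k * (2 + real k) powr (- \<alpha>)))"
    using energy_le[OF assms, of k] sum_gap_ge[of k] by (elim order_trans) simp
  then show ?thesis
    using prob_avoid_le_sqrt_energy[OF assms, of k] by (elim order_trans) (simp add: mult_left_mono)
qed

lemma \<beta>_pos:
  assumes "x \<in> X"
  shows "0 < \<beta>"
proof -
  obtain y where "y \<in> G x" using nbhd_nonempty[OF assms] by blast
  then obtain n where "n \<le> L" and path: "((\<lambda>u v. u \<in> X \<and> v \<in> G u) ^^ n) x y"
    using connected[OF assms] nbhd_subset[OF assms] by blast
  have "n \<noteq> 0"
    using path \<open>y \<in> G x\<close> nbhd_irrefl[OF assms] by (cases n) auto
  with card_X_pos_and_d_pos[OF assms] show ?thesis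
    using \<open>n \<le> L\<close> by (simp add: \<beta>_def)
qed

text \<open>Since \<open>\<alpha> < 1\<close>, the bound of \<open>prob_avoid_global_min_le\<close> decays faster than any power of \<open>k\<close>.\<close>

lemma prob_avoid_global_min_le_powr:
  obtains A where "0 < A" "\<And>init k. init \<in> X \<Longrightarrow> 1 \<le> k \<Longrightarrow>
    measure_pmf.prob (sa_run c G temp init k) {xs. set xs \<inter> global_mins = {}} \<le> A * real k powr (- r)"
proof (cases "X = {}")
  case True
  then show ?thesis by (intro that[of 1]) auto
next
  case False
  then have "0 < \<beta>" using \<beta>_pos by blast
  then obtain C where "0 < C" and C: "\<And>k::nat. 1 \<le> k \<Longrightarrow>
      (2 + real k) * exp (- (\<beta> * real k * (2 + real k) powr (- \<alpha>))) \<le> C * real k powr (- (2 * r))"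
    using linear_times_exp_neg_le_powr \<alpha>_nonneg \<alpha>_less_1 by blast
  define M where "M = real (card X) * real d"
  obtain x where "x \<in> X" using False by blast
  then have "0 < M"
    unfolding M_def using card_X_pos_and_d_pos[OF \<open>x \<in> X\<close>] by simp
  show ?thesis
  proof (rule that[of "sqrt (M * C)"])
    show "0 < sqrt (M * C)" using \<open>0 < M\<close> \<open>0 < C\<close> by simp
    fix init and k :: nat assume "init \<in> X" "1 \<le> k"
    have "real k powr (- (2 * r)) = (real k powr (- r))\<^sup>2"
      by (simp add: power2_eq_square powr_add[symmetric])
    then have "M * ((2 + real k) * exp (- (\<beta> * real k * (2 + real k) powr (- \<alpha>))))
        \<le> M * (C * (real k powr (- r))\<^sup>2)"
      using C[OF \<open>1 \<le> k\<close>] \<open>0 < M\<close> by (intro mult_left_mono) auto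
    then have "sqrt (M * ((2 + real k) * exp (- (\<beta> * real k * (2 + real k) powr (- \<alpha>)))))
        \<le> sqrt (M * (C * (real k powr (- r))\<^sup>2))"
      by (rule real_sqrt_le_mono)
    also have "\<dots> = sqrt (M * C) * real k powr (- r)"
      by (simp add: real_sqrt_mult mult.assoc)
    finally have "sqrt (M * ((2 + real k) * exp (- (\<beta> * real k * (2 + real k) powr (- \<alpha>)))))
        \<le> sqrt (M * C) * real k powr (- r)" .
    then show "measure_pmf.prob (sa_run c G temp init k) {xs. set xs \<inter> global_mins = {}}
        \<le> sqrt (M * C) * real k powr (- r)"
      using prob_avoid_global_min_le[OF \<open>init \<in> X\<close>, of k] by (simp add: M_def mult.assoc)
  qed
qed

lemma prob_visit_global_min_gt:
  assumes "1 \<le> W" "0 \<le> r"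
  obtains A where "0 < A" "\<And>init k. init \<in> X \<Longrightarrow> 1 \<le> k \<Longrightarrow>
    measure_pmf.prob (sa_run c G temp init k) {xs. \<exists>s \<in> set xs. is_global_min c X s}
      > 1 - A / (real k / W) powr r"
proof -
  obtain A where "0 < A" and avoid: "\<And>init k. init \<in> X \<Longrightarrow> 1 \<le> k \<Longrightarrow>
      measure_pmf.prob (sa_run c G temp init k) {xs. set xs \<inter> global_mins = {}} \<le> A * real k powr (- r)"
    using prob_avoid_global_min_le_powr by blast
  show ?thesis
  proof (rule that[of "2 * A"])
    fix init and k :: nat
    assume "init \<in> X" "1 \<le> k"
    let ?P = "sa_run c G temp init k"
    have "measure_pmf.prob ?P {xs. \<exists>s \<in> set xs. is_global_min c X s}
        = 1 - measure_pmf.prob ?P {xs. set xs \<inter> global_mins = {}}"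
      using prob_visit_eq_1_minus_prob_avoid[of ?P global_mins] by simp
    moreover have "A * real k powr (- r) < 2 * A / (real k / W) powr r"
      using powr_neg_less_div_powr[OF \<open>0 < A\<close> _ assms] \<open>1 \<le> k\<close> by simp
    ultimately show "measure_pmf.prob ?P {xs. \<exists>s \<in> set xs. is_global_min c X s}
        > 1 - 2 * A / (real k / W) powr r"
      using avoid[OF \<open>init \<in> X\<close> \<open>1 \<le> k\<close>] by linarith
  qed (use \<open>0 < A\<close> in simp)
qed
end

definition flip :: "bool list \<Rightarrow> nat \<Rightarrow> bool list" where
  "flip x i = x[i := \<not> x ! i]"

lemma length_flip [simp]: "length (flip x i) = length x"
  by (simp add: flip_def)

lemma HW_eq_card: "HW s = card {i. i < length s \<and> s ! i}"
  unfolding HW_def by (simp add: length_filter_conv_card)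

lemma HW_flip:
  assumes "i < length x"
  shows "HW (flip x i) = (if x ! i then HW x - 1 else HW x + 1)"
proof -
  let ?ones = "\<lambda>s. {j. j < length s \<and> s ! j}"
  have "?ones (flip x i) = (if x ! i then ?ones x - {i} else insert i (?ones x))"
    using assms by (auto simp: flip_def nth_list_update)
  then show ?thesis
    using assms unfolding HW_eq_card by (auto simp: card_insert_if)
qed

lemma HD_sym: "length x = length y \<Longrightarrow> HD x y = HD y x"
  unfolding HD_def by metis

lemma HD_le_length: "HD x y \<le> length x"
  unfolding HD_def by (rule order_trans[OF card_mono[of "{..<length x}"]]) auto

lemma HD_eq_0_iff: "length x = length y \<Longrightarrow> HD x y = 0 \<longleftrightarrow> x = y"
  unfolding HD_def by (auto intro: nth_equalityI)

lemma HD_flip_left: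
  assumes "i < length x" "length y = length x"
  shows "HD (flip x i) y = (if x ! i = y ! i then HD x y + 1 else HD x y - 1)"
proof -
  let ?diff = "\<lambda>s. {j. j < length s \<and> s ! j \<noteq> y ! j}"
  have "?diff (flip x i) = (if x ! i = y ! i then insert i (?diff x) else ?diff x - {i})"
    using assms by (auto simp: flip_def nth_list_update)
  then show ?thesis
    using assms unfolding HD_def by (auto simp: card_insert_if)
qed

lemma HD_flip: "i < length x \<Longrightarrow> HD x (flip x i) = 1"
proof -
  assume "i < length x"
  then have "{j. j < length x \<and> x ! j \<noteq> flip x i ! j} = {i}"
    by (auto simp: flip_def nth_list_update)
  then show ?thesis unfolding HD_def by simp
qed

lemma HD_eq_1_imp_flip:
  assumes "length y = length x" "HD x y = 1"
  obtains i where "i < length x" "y = flip x i"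
proof -
  obtain i where i: "{j. j < length x \<and> x ! j \<noteq> y ! j} = {i}"
    using assms(2) unfolding HD_def by (auto simp: card_Suc_eq)
  then have "i < length x" "x ! i \<noteq> y ! i" by auto
  have "y = flip x i"
  proof (rule nth_equalityI)
    show "length y = length (flip x i)" using assms(1) by simp
    fix j assume "j < length y"
    then show "y ! j = flip x i ! j"
      using i \<open>x ! i \<noteq> y ! i\<close> assms(1) by (cases "j = i") (auto simp: flip_def nth_list_update)
  qed
  with \<open>i < length x\<close> show ?thesis by (rule that)
qed

lemma finite_search_space: "finite (search_space N nl nu)"
  by (rule finite_subset[OF _ finite_lists_length_eq[of UNIV N]]) (auto simp: search_space_def)

lemma flip_in_nbhd:
  assumes "x \<in> search_space N nl nu" "i < N" "if x ! i then nl < HW x else HW x < nu"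
  shows "flip x i \<in> nbhd N nl nu x"
  using assms HW_flip[of i x] HD_flip[of i x]
  by (auto simp: nbhd_def search_space_def split: if_splits)

lemma not_in_nbhd: "x \<notin> nbhd N nl nu x"
  by (simp add: nbhd_def HD_def)

lemma nbhd_ne_empty:
  assumes x: "x \<in> search_space N nl nu" and "nl < nu" "nu \<le> N"
  shows "nbhd N nl nu x \<noteq> {}"
proof -
  have len: "length x = N" using x by (simp add: search_space_def)
  have "\<exists>i<N. if x ! i then nl < HW x else HW x < nu"
  proof (cases "HW x < nu")
    case True
    have "\<exists>i<N. \<not> x ! i"
    proof (rule ccontr)
      assume "\<not> ?thesis"
      then have "{i. i < length x \<and> x ! i} = {..<N}" using len by auto
      then have "HW x = N" by (simp add: HW_eq_card)
      with True \<open>nu \<le> N\<close> show False by simp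
    qed
    with True show ?thesis by auto
  next
    case False
    then have "nl < HW x" using \<open>nl < nu\<close> x by (simp add: search_space_def)
    then have "{i. i < length x \<and> x ! i} \<noteq> {}"
      by (metis HW_eq_card card.empty less_nat_zero_code)
    then have "\<exists>i<N. x ! i" using len by auto
    with \<open>nl < HW x\<close> show ?thesis by auto
  qed
  then show ?thesis using flip_in_nbhd[OF x] by blast
qed

lemma card_nbhd_le_N: "x \<in> search_space N nl nu \<Longrightarrow> card (nbhd N nl nu x) \<le> N"
proof -
  assume "x \<in> search_space N nl nu"
  then have "nbhd N nl nu x \<subseteq> flip x ` {..<N}"
    by (auto simp: nbhd_def search_space_def elim!: HD_eq_1_imp_flip)
  then show ?thesis
    using card_mono[OF _ \<open>nbhd N nl nu x \<subseteq> _\<close>] card_image_le[of "{..<N}" "flip x"] by simp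
qed

text \<open>From any admissible state a single flip moves towards any other admissible
  state: the Hamming-weight constraint can only block all useful flips if every
  difference points the same way, which would push \<open>HW g\<close> out of \<open>[nl, nu]\<close>.\<close>

lemma exists_flip_towards:
  assumes x: "x \<in> search_space N nl nu" and g: "g \<in> search_space N nl nu" and "x \<noteq> g"
    and "nl < nu"
  obtains i where "i < N" "x ! i \<noteq> g ! i" "if x ! i then nl < HW x else HW x < nu"
proof -
  have len: "length x = N" "length g = N" using x g by (auto simp: search_space_def)
  have "\<exists>i<N. x ! i \<noteq> g ! i \<and> (if x ! i then nl < HW x else HW x < nu)"
  proof (rule ccontr)
    assume "\<not> ?thesis"
    then have blocked: "if x ! j then HW x \<le> nl else nu \<le> HW x" if "j < N" "x ! j \<noteq> g ! j" for j
      using that by (cases "x ! j") (metis not_less)+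
    obtain i0 where "i0 < N" "x ! i0 \<noteq> g ! i0"
      using \<open>x \<noteq> g\<close> len nth_equalityI[of x g] by auto
    show False
    proof (cases "x ! i0")
      case True
      then have "HW x = nl"
        using blocked[OF \<open>i0 < N\<close> \<open>x ! i0 \<noteq> g ! i0\<close>] x by (simp add: search_space_def)
      then have "x ! j" if "j < N" "g ! j" for j
        using blocked[OF \<open>j < N\<close>] that \<open>nl < nu\<close> by (cases "x ! j") auto
      then have "{j. j < length g \<and> g ! j} \<subset> {j. j < length x \<and> x ! j}"
        using True \<open>i0 < N\<close> \<open>x ! i0 \<noteq> g ! i0\<close> len by auto
      then have "HW g < HW x" unfolding HW_eq_card by (intro psubset_card_mono) auto
      then show False using \<open>HW x = nl\<close> g by (simp add: search_space_def)
    next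
      case False
      then have "HW x = nu"
        using blocked[OF \<open>i0 < N\<close> \<open>x ! i0 \<noteq> g ! i0\<close>] x by (simp add: search_space_def)
      then have "g ! j" if "j < N" "x ! j" for j
        using blocked[OF \<open>j < N\<close>] that \<open>nl < nu\<close> by (cases "g ! j") auto
      then have "{j. j < length x \<and> x ! j} \<subset> {j. j < length g \<and> g ! j}"
        using False \<open>i0 < N\<close> \<open>x ! i0 \<noteq> g ! i0\<close> len by auto
      then have "HW x < HW g" unfolding HW_eq_card by (intro psubset_card_mono) auto
      then show False using \<open>HW x = nu\<close> g by (simp add: search_space_def)
    qed
  qed
  then show ?thesis using that by blast
qed

lemma search_space_path:
  assumes "x \<in> search_space N nl nu" "g \<in> search_space N nl nu" "nl < nu"
  shows "((\<lambda>u v. u \<in> search_space N nl nu \<and> v \<in> nbhd N nl nu u) ^^ HD x g) x g"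
  using assms(1)
proof (induction "HD x g" arbitrary: x)
  case 0
  then show ?case using HD_eq_0_iff[of x g] assms(2) by (simp add: search_space_def)
next
  case (Suc n)
  then have "x \<noteq> g" by (auto simp: HD_def)
  then obtain i where i: "i < N" "x ! i \<noteq> g ! i" "if x ! i then nl < HW x else HW x < nu"
    using exists_flip_towards[OF Suc.prems assms(2) _ assms(3)] by blast
  have step: "flip x i \<in> nbhd N nl nu x" by (rule flip_in_nbhd[OF Suc.prems i(1,3)])
  have closer: "HD (flip x i) g = n"
    using HD_flip_left[of i x g] i Suc.prems assms(2) Suc.hyps(2) by (simp add: search_space_def)
  moreover have "flip x i \<in> search_space N nl nu" using step by (simp add: nbhd_def)
  ultimately have "((\<lambda>u v. u \<in> search_space N nl nu \<and> v \<in> nbhd N nl nu u) ^^ n) (flip x i) g"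
    using Suc.hyps(1)[OF closer[symmetric]] by (simp only: closer)
  then show ?case
    unfolding Suc.hyps(2)[symmetric] using Suc.prems step by (intro relpowp_Suc_I2) auto
qed

lemma cond_rate_bounds: "0 \<le> cond_rate h D s a y" "cond_rate h D s a y \<le> 1"
proof -
  have "length (filter (\<lambda>(x, a', y'). a' = a \<and> y' = y \<and> h s x) D)
      \<le> length (filter (\<lambda>(x, a', y'). a' = a \<and> y' = y) D)"
    by (induction D) auto
  then show "0 \<le> cond_rate h D s a y" "cond_rate h D s a y \<le> 1"
    unfolding cond_rate_def by (auto simp: divide_le_eq)
qed

lemma EOD_bounds: "0 \<le> EOD h D s" "EOD h D s \<le> 1"
  unfolding EOD_def
  using cond_rate_bounds[of h D s False True] cond_rate_bounds[of h D s True True]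
    cond_rate_bounds[of h D s False False] cond_rate_bounds[of h D s True False]
  by (auto simp: abs_le_iff)

lemma cost_bounds:
  assumes "0 \<le> p"
  shows "0 \<le> cost N p t h D s" "cost N p t h D s \<le> 1 + p * EOD h D (s0 N)"
proof -
  have "0 \<le> p * EOD h D (s0 N)" using assms EOD_bounds(1)[of h D "s0 N"] by simp
  then show "0 \<le> cost N p t h D s" "cost N p t h D s \<le> 1 + p * EOD h D (s0 N)"
    using EOD_bounds[of h D s] by (auto simp: cost_def indicator_bool_def)
qed

lemma annealing_search_space:
  assumes "nl < nu" "nu \<le> N" "0 \<le> p" "1 + p * EOD h D (s0 N) \<le> T0"
  shows "annealing (search_space N nl nu) (nbhd N nl nu) (cost N p t h D) N N
           (1 + p * EOD h D (s0 N)) T0"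
proof unfold_locales
  fix x y assume x: "x \<in> search_space N nl nu" and y: "y \<in> search_space N nl nu"
  show "\<exists>n \<le> N. ((\<lambda>u v. u \<in> search_space N nl nu \<and> v \<in> nbhd N nl nu u) ^^ n) x y"
    using search_space_path[OF x y assms(1)] HD_le_length[of x y] x by (auto simp: search_space_def)
  show "y \<in> nbhd N nl nu x \<longleftrightarrow> x \<in> nbhd N nl nu y"
    using x y HD_sym[of x y] by (auto simp: nbhd_def search_space_def)
next
  fix x assume x: "x \<in> search_space N nl nu"
  show "nbhd N nl nu x \<subseteq> search_space N nl nu" by (auto simp: nbhd_def)
  show "nbhd N nl nu x \<noteq> {}" by (rule nbhd_ne_empty[OF x assms(1,2)])
  show "card (nbhd N nl nu x) \<le> N" by (rule card_nbhd_le_N[OF x])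
  show "x \<notin> nbhd N nl nu x" by (rule not_in_nbhd)
  show "0 \<le> cost N p t h D x" "cost N p t h D x \<le> 1 + p * EOD h D (s0 N)"
    using cost_bounds[OF assms(3)] by blast+
next
  show "0 < 1 + p * EOD h D (s0 N)"
    using assms(3) EOD_bounds(1)[of h D "s0 N"] by (simp add: add_pos_nonneg)
next
  show "finite (search_space N nl nu)" by (rule finite_search_space)
next
  show "1 + p * EOD h D (s0 N) \<le> T0" by (rule assms(4))
qed

theorem lemma4p2:
  fixes N nl nu :: nat
    and h :: "bool list \<Rightarrow> 'x \<Rightarrow> bool"
    and D :: "('x \<times> bool \<times> bool) list"
    and t p T0 :: real
  assumes "nl < nu" and "nu \<le> N"
    and "0 < t" and "t < 1" and "p > 1"
    and "T0 \<ge> (1 + p * EOD h D (s0 N)) * real (nu - nl)"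
  shows "\<exists>A > 0. \<forall>init \<in> search_space N nl nu. \<forall>k :: nat.
           k > nat \<lceil>real (nu - nl) / 2\<rceil> \<longrightarrow>
           measure_pmf.prob
             (sa_run (cost N p t h D) (nbhd N nl nu) (\<lambda>m. T0 / ln (2 + real m)) init k)
             {xs. \<exists>s \<in> set xs. is_global_min (cost N p t h D) (search_space N nl nu) s}
           > 1 - A / ((real k / real (nu - nl)) powr
                 (min (1 / (real (nu - nl) * real N ^ nat \<lceil>real (nu - nl) / 2\<rceil>))
                      (4 / (T0 * real (length D) ^ 2))))"
proof -
  let ?H = "1 + p * EOD h D (s0 N)"
  let ?r = "min (1 / (real (nu - nl) * real N ^ nat \<lceil>real (nu - nl) / 2\<rceil>))
                (4 / (T0 * real (length D) ^ 2))"
  have "?H * 1 \<le> ?H * real (nu - nl)"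
    using assms(1,5) EOD_bounds(1)[of h D "s0 N"] by (intro mult_left_mono) auto
  then have "?H \<le> T0" using assms(6) by simp
  interpret annealing "search_space N nl nu" "nbhd N nl nu" "cost N p t h D" N N ?H T0
    by (rule annealing_search_space) (use assms \<open>?H \<le> T0\<close> in auto)
  have "1 \<le> real (nu - nl)" "0 \<le> ?r" using assms(1) T0_pos by auto
  then obtain A where "0 < A" and visit: "\<And>init k. init \<in> search_space N nl nu \<Longrightarrow> 1 \<le> k \<Longrightarrow>
      measure_pmf.prob (sa_run (cost N p t h D) (nbhd N nl nu) temp init k)
        {xs. \<exists>s \<in> set xs. is_global_min (cost N p t h D) (search_space N nl nu) s}
      > 1 - A / (real k / real (nu - nl)) powr ?r"
    by (rule prob_visit_global_min_gt) blast
  show ?thesis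
    using \<open>0 < A\<close> visit by (intro exI[of _ A]) (auto simp: Suc_le_eq)
qed

end
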